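(* There is an absolute constant $c>0$ such that for every (nondegenerate) hyperbolic triangle $T$ with height $h$, the area of $T$ is at least $c\cdot\min(1,h^2)$.
   Context: The hyperbolic plane is the complete simply connected Riemannian surface of constant curvature $-1$. The height of a hyperbolic triangle is the minimum, over its three vertices, of the hyperbolic distance from the vertex to the opposite side. *)

theory Defs
  imports "HOL-Analysis.Analysis"
begin

text \<open>The hyperbolic plane (curvature -1) in the Beltrami--Klein model:
  points are the open unit disk of the Euclidean plane (here identified with complex),
  geodesics are Euclidean chords, so geodesic segments are Euclidean segments and
  the (closed) triangle with vertices a b c is the Euclidean convex hull of {a,b,c}.\<close>

definition hyp_plane :: "complex set" where
  "hyp_plane = ball 0 1"

definition hdist :: "complex \<Rightarrow> complex \<Rightarrow> real" where
  "hdist p q = arcosh ((1 - p \<bullet> q) / sqrt ((1 - (norm p)\<^sup>2) * (1 - (norm q)\<^sup>2)))"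

definition hdist_set :: "complex \<Rightarrow> complex set \<Rightarrow> real" where
  "hdist_set p S = Inf (hdist p ` S)"

text \<open>Riemannian area of a region: the Klein metric has area density (1-|x|^2)^(-3/2)
  with respect to Lebesgue measure.\<close>
definition hyp_area :: "complex set \<Rightarrow> real" where
  "hyp_area S = integral S (\<lambda>x. 1 / ((1 - (norm x)\<^sup>2) powr (3/2)))"

definition hyp_triangle :: "complex \<Rightarrow> complex \<Rightarrow> complex \<Rightarrow> complex set" where
  "hyp_triangle a b c = convex hull {a, b, c}"

definition hyp_height :: "complex \<Rightarrow> complex \<Rightarrow> complex \<Rightarrow> real" where
  "hyp_height a b c = min (hdist_set a (closed_segment b c))
                        (min (hdist_set b (closed_segment a c)) (hdist_set c (closed_segment a b)))"

end

(*
  Rotations about the origin and the boosts along the real axis preserve distances, triangles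
  and area, so we may assume that the longest side bc lies on the real axis and the opposite
  vertex is a = it with 0 <= t < 1. Since bc is the longest side, b and c lie on opposite sides
  of 0, and t^2 <= 3 m^2 where m is the larger of |b| and |c|. The height is therefore at most
  d(a, 0) = arcosh (1 / sqrt (1 - t^2)), which is at most 2t when t <= 1/2. On the other hand the
  triangle contains a Euclidean rectangle of area m t / 4, and the area density of the Klein
  metric is at least 1. Comparing the two bounds gives area >= min (1, h^2) / 32.
*)
theory Submission
  imports Defs
begin

section \<open>Change of variables in the complex plane\<close>

lemma absolutely_integrable_continuous_on_compact:
  fixes f :: "'a::euclidean_space \<Rightarrow> real"
  assumes "compact S" "continuous_on S f"
  shows "f absolutely_integrable_on S"
proof -
  have "g integrable_on S" if "continuous_on S g" for g :: "'a \<Rightarrow> real"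
  proof -
    have "(\<lambda>x. indicator S x *\<^sub>R g x) integrable_on UNIV"
      using borel_integrable_compact[OF \<open>compact S\<close> that] by (rule integrable_on_lborel)
    moreover have "(\<lambda>x. indicator S x *\<^sub>R g x) = (\<lambda>x. if x \<in> S then g x else 0)"
      by (auto simp: indicator_def)
    ultimately show ?thesis
      by (simp add: integrable_restrict_UNIV)
  qed
  then show ?thesis
    using assms(2) by (simp add: absolutely_integrable_on_def continuous_on_rabs)
qed

lemma has_absolute_integral_change_of_variables_real_valued:
  fixes f :: "real^'m::{finite,wellorder} \<Rightarrow> real" and g :: "real^'m::_ \<Rightarrow> real^'m::_"
  assumes "S \<in> sets lebesgue"
    and "\<And>x. x \<in> S \<Longrightarrow> (g has_derivative g' x) (at x within S)"
    and "inj_on g S"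
  shows "(\<lambda>x. \<bar>det (matrix (g' x))\<bar> * f (g x)) absolutely_integrable_on S \<and>
           integral S (\<lambda>x. \<bar>det (matrix (g' x))\<bar> * f (g x)) = b
     \<longleftrightarrow> f absolutely_integrable_on (g ` S) \<and> integral (g ` S) f = b"
  using has_absolute_integral_change_of_variables[OF assms, of "\<lambda>x. vec (f x) :: real^1" "vec b"]
  by (simp add: absolutely_integrable_on_1_iff integral_on_1_eq vec_eq_iff)

definition cart_of_complex :: "complex \<Rightarrow> real^2" where
  "cart_of_complex z = vector [Re z, Im z]"

definition complex_of_cart :: "real^2 \<Rightarrow> complex" where
  "complex_of_cart v = Complex (v$1) (v$2)"

lemma cart_of_complex_inverse [simp]: "complex_of_cart (cart_of_complex z) = z"
  by (simp add: cart_of_complex_def complex_of_cart_def complex_eq_iff)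

lemma complex_of_cart_inverse [simp]: "cart_of_complex (complex_of_cart v) = v"
  by (simp add: cart_of_complex_def complex_of_cart_def vec_eq_iff forall_2)

lemma cart_of_complex_eq_iff [simp]: "cart_of_complex z = cart_of_complex w \<longleftrightarrow> z = w"
  by (metis cart_of_complex_inverse)

lemma cart_of_complex_nth [simp]:
  "cart_of_complex z $ 1 = Re z" "cart_of_complex z $ 2 = Im z"
  by (simp_all add: cart_of_complex_def)

lemma complex_of_cart_Re_Im [simp]:
  "Re (complex_of_cart v) = v$1" "Im (complex_of_cart v) = v$2"
  by (simp_all add: complex_of_cart_def)

lemma linear_cart_of_complex: "linear cart_of_complex"
  by (rule linearI) (simp_all add: vec_eq_iff forall_2)

lemma linear_complex_of_cart: "linear complex_of_cart"
  by (rule linearI) (simp_all add: complex_eq_iff)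

lemma compact_cart_of_complex_image: "compact S \<Longrightarrow> compact (cart_of_complex ` S)"
  using linear_cart_of_complex
  by (simp add: compact_continuous_image linear_continuous_on linear_linear)

lemma cart_of_complex_cbox:
  "cart_of_complex ` cbox u v = cbox (cart_of_complex u) (cart_of_complex v)"
  by (force simp: in_cbox_complex_iff mem_box_cart forall_2 image_iff
            intro: bexI[of _ "complex_of_cart _"])

lemma complex_of_cart_cbox:
  "complex_of_cart ` cbox u v = cbox (complex_of_cart u) (complex_of_cart v)"
  by (force simp: in_cbox_complex_iff mem_box_cart forall_2 image_iff
            intro: bexI[of _ "cart_of_complex _"])

lemma content_cart_of_complex_cbox:
  "Henstock_Kurzweil_Integration.content (cbox (cart_of_complex u) (cart_of_complex v))
     = Henstock_Kurzweil_Integration.content (cbox u v)"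
  using interval_ne_empty_cart(1)[of "cart_of_complex u" "cart_of_complex v"]
  by (auto simp: content_cbox_if_cart content_cbox_cases UNIV_2 Basis_complex_def forall_2)

lemma has_integral_volume_preserving_linear_image:
  fixes g :: "'a::euclidean_space \<Rightarrow> 'b::euclidean_space" and f :: "'b \<Rightarrow> 'c::banach"
  assumes "linear g" and "\<And>x. h (g x) = x" "\<And>y. g (h y) = y"
    and "\<And>u v. \<exists>w z. g ` cbox u v = cbox w z" "\<And>u v. \<exists>w z. h ` cbox u v = cbox w z"
    and "\<And>u v. Henstock_Kurzweil_Integration.content (g ` cbox u v)
                = Henstock_Kurzweil_Integration.content (cbox u v)"
    and "bounded S" "(f has_integral i) S"
  shows "((\<lambda>x. f (g x)) has_integral i) (h ` S)"
proof -
  obtain r where r: "S \<subseteq> cbox (-r) r"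
    using \<open>bounded S\<close> bounded_subset_cbox_symmetric by blast
  let ?fS = "\<lambda>y. if y \<in> S then f y else 0"
  have "(?fS has_integral i) (cbox (-r) r)"
    using assms(8) r by simp
  then have "((\<lambda>x. ?fS (g x)) has_integral (1/1) *\<^sub>R i) (h ` cbox (-r) r)"
    by (intro has_integral_twiddle) (use assms in \<open>auto simp: linear_continuous_at linear_linear\<close>)
  moreover have "(\<lambda>x. ?fS (g x)) = (\<lambda>x. if x \<in> h ` S then f (g x) else 0)"
    by (metis assms(2,3) image_iff)
  ultimately show ?thesis
    using r by (simp add: image_mono)
qed

lemma has_integral_cart_of_complex_iff:
  fixes f :: "complex \<Rightarrow> 'a::banach"
  assumes "bounded S"
  shows "((\<lambda>v. f (complex_of_cart v)) has_integral i) (cart_of_complex ` S) \<longleftrightarrow> (f has_integral i) S"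
proof
  have "bounded (cart_of_complex ` S)"
    using assms linear_cart_of_complex by (simp add: bounded_linear_image linear_linear)
  moreover assume "((\<lambda>v. f (complex_of_cart v)) has_integral i) (cart_of_complex ` S)"
  ultimately have "((\<lambda>z. f (complex_of_cart (cart_of_complex z))) has_integral i)
                     (complex_of_cart ` cart_of_complex ` S)"
    by (intro has_integral_volume_preserving_linear_image
          [where g = cart_of_complex and f = "\<lambda>v. f (complex_of_cart v)"])
      (auto simp: linear_cart_of_complex cart_of_complex_cbox complex_of_cart_cbox
        content_cart_of_complex_cbox)
  then show "(f has_integral i) S"
    by (simp add: image_image)
next
  assume "(f has_integral i) S"
  then show "((\<lambda>v. f (complex_of_cart v)) has_integral i) (cart_of_complex ` S)"
    using assms
    by (intro has_integral_volume_preserving_linear_image)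
      (auto simp: linear_complex_of_cart cart_of_complex_cbox complex_of_cart_cbox
        content_cart_of_complex_cbox[of "complex_of_cart _" "complex_of_cart _", simplified])
qed

definition real_jacobian :: "(complex \<Rightarrow> complex) \<Rightarrow> real" where
  "real_jacobian L = Re (L 1) * Im (L \<i>) - Re (L \<i>) * Im (L 1)"

lemma det_matrix_cart_conj:
  "det (matrix (cart_of_complex \<circ> L \<circ> complex_of_cart)) = real_jacobian L"
proof -
  have "complex_of_cart (axis 1 1) = 1" "complex_of_cart (axis 2 1) = \<i>"
    by (simp_all add: complex_of_cart_def axis_def complex_eq_iff)
  then show ?thesis
    by (simp add: det_2 matrix_def real_jacobian_def)
qed

lemma has_derivative_cart_conj:
  assumes "\<And>z. z \<in> S \<Longrightarrow> (\<Phi> has_derivative D z) (at z within S)" "v \<in> cart_of_complex ` S"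
  shows "(cart_of_complex \<circ> \<Phi> \<circ> complex_of_cart has_derivative
           cart_of_complex \<circ> D (complex_of_cart v) \<circ> complex_of_cart)
           (at v within cart_of_complex ` S)"
proof -
  obtain z where z: "z \<in> S" "complex_of_cart v = z"
    using assms(2) by force
  have "(\<Phi> \<circ> complex_of_cart has_derivative D z \<circ> complex_of_cart)
          (at v within cart_of_complex ` S)"
    using linear_imp_has_derivative[OF linear_complex_of_cart] assms(1)[OF z(1)] z(2)
    by (intro diff_chain_within) (auto simp: image_image)
  with linear_imp_has_derivative[OF linear_cart_of_complex] show ?thesis
    unfolding z(2) by (metis diff_chain_within o_assoc)
qed

lemma integral_change_of_variables_complex:
  fixes f :: "complex \<Rightarrow> real"
  assumes "compact S"
    and der: "\<And>z. z \<in> S \<Longrightarrow> (\<Phi> has_derivative D z) (at z within S)"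
    and "inj_on \<Phi> S"
    and "continuous_on (\<Phi> ` S) f"
  shows "integral (\<Phi> ` S) f = integral S (\<lambda>z. \<bar>real_jacobian (D z)\<bar> * f (\<Phi> z))"
proof -
  let ?S' = "cart_of_complex ` S"
  let ?G = "cart_of_complex \<circ> \<Phi> \<circ> complex_of_cart"
  let ?G' = "\<lambda>v. cart_of_complex \<circ> D (complex_of_cart v) \<circ> complex_of_cart"
  define I where "I = integral (\<Phi> ` S) f"
  have "continuous_on S \<Phi>"
    using der has_derivative_continuous continuous_on_eq_continuous_within by blast
  then have image: "compact (\<Phi> ` S)"
    using \<open>compact S\<close> compact_continuous_image by blast
  have G_image: "?G ` ?S' = cart_of_complex ` \<Phi> ` S"
    by (simp add: image_image)
  have "(f has_integral I) (\<Phi> ` S)"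
    unfolding I_def using absolutely_integrable_continuous_on_compact[OF image assms(4)]
    by (metis integrable_integral set_lebesgue_integral_eq_integral(1))
  then have "((\<lambda>v. f (complex_of_cart v)) has_integral I) (?G ` ?S')"
    by (simp only: G_image has_integral_cart_of_complex_iff[OF compact_imp_bounded[OF image]])
  then have int: "integral (?G ` ?S') (\<lambda>v. f (complex_of_cart v)) = I"
    by (rule integral_unique)
  have absint: "(\<lambda>v. f (complex_of_cart v)) absolutely_integrable_on ?G ` ?S'"
    unfolding G_image using compact_cart_of_complex_image[OF image] assms(4)
    by (intro absolutely_integrable_continuous_on_compact continuous_on_compose2[OF assms(4)])
      (auto simp: linear_continuous_on linear_linear linear_complex_of_cart)
  have lebesgue: "?S' \<in> sets lebesgue"
    using compact_cart_of_complex_image[OF \<open>compact S\<close>]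
    by (simp add: compact_imp_closed lebesgue_closedin)
  have inj: "inj_on ?G ?S'"
    using \<open>inj_on \<Phi> S\<close> by (auto simp: inj_on_def)
  have "(\<lambda>v. \<bar>det (matrix (?G' v))\<bar> * f (complex_of_cart (?G v))) absolutely_integrable_on ?S'
      \<and> integral ?S' (\<lambda>v. \<bar>det (matrix (?G' v))\<bar> * f (complex_of_cart (?G v))) = I"
    using has_absolute_integral_change_of_variables_real_valued
        [OF lebesgue has_derivative_cart_conj[OF der] inj] absint int
    by (rule iffD2[OF _ conjI])
  then have "((\<lambda>v. \<bar>real_jacobian (D (complex_of_cart v))\<bar> * f (\<Phi> (complex_of_cart v)))
      has_integral I) ?S'"
    by (auto simp: has_integral_iff det_matrix_cart_conj dest: set_lebesgue_integral_eq_integral(1))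
  then have "((\<lambda>z. \<bar>real_jacobian (D z)\<bar> * f (\<Phi> z)) has_integral I) S"
    using has_integral_cart_of_complex_iff[OF compact_imp_bounded[OF \<open>compact S\<close>],
        where f = "\<lambda>z. \<bar>real_jacobian (D z)\<bar> * f (\<Phi> z)"]
    by simp
  then show ?thesis
    by (simp add: I_def has_integral_iff)
qed

section \<open>Distance and area in the Klein model\<close>

definition cosh_hdist :: "complex \<Rightarrow> complex \<Rightarrow> real" where
  "cosh_hdist p q = (1 - p \<bullet> q) / sqrt ((1 - (norm p)\<^sup>2) * (1 - (norm q)\<^sup>2))"

lemma hdist_eq_arcosh: "hdist p q = arcosh (cosh_hdist p q)"
  by (simp add: hdist_def cosh_hdist_def)

lemma cosh_hdist_commute: "cosh_hdist p q = cosh_hdist q p"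
  by (simp add: cosh_hdist_def inner_commute mult.commute)

lemma mem_hyp_plane: "z \<in> hyp_plane \<longleftrightarrow> norm z < 1"
  by (simp add: hyp_plane_def)

lemma one_minus_norm_square_pos: "norm z < 1 \<Longrightarrow> 0 < 1 - (norm z)\<^sup>2"
  by (simp add: abs_square_less_1)

lemma one_le_cosh_hdist:
  assumes "norm p < 1" "norm q < 1"
  shows "1 \<le> cosh_hdist p q"
proof -
  have "p \<bullet> q \<le> norm p * norm q"
    by (rule norm_cauchy_schwarz)
  moreover have "norm p * norm q < 1"
    using mult_left_le[of "norm q" "norm p"] assms by simp
  moreover have "(1 - (norm p)\<^sup>2) * (1 - (norm q)\<^sup>2) \<le> (1 - norm p * norm q)\<^sup>2"
    using zero_le_power2[of "norm p - norm q"] by (simp add: power2_eq_square algebra_simps)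
  ultimately have "(1 - (norm p)\<^sup>2) * (1 - (norm q)\<^sup>2) \<le> (1 - p \<bullet> q)\<^sup>2"
    by (smt (verit) power_mono norm_ge_zero mult_nonneg_nonneg)
  then have "sqrt ((1 - (norm p)\<^sup>2) * (1 - (norm q)\<^sup>2)) \<le> 1 - p \<bullet> q"
    using \<open>p \<bullet> q \<le> _\<close> \<open>norm p * norm q < 1\<close> by (simp add: real_le_lsqrt)
  moreover have "0 < sqrt ((1 - (norm p)\<^sup>2) * (1 - (norm q)\<^sup>2))"
    using mult_pos_pos[OF one_minus_norm_square_pos one_minus_norm_square_pos] assms by simp
  ultimately show ?thesis
    by (simp add: cosh_hdist_def le_divide_eq)
qed

lemma hdist_nonneg: "norm p < 1 \<Longrightarrow> norm q < 1 \<Longrightarrow> 0 \<le> hdist p q"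
  by (simp add: hdist_eq_arcosh one_le_cosh_hdist arcosh_nonneg_real)

lemma hdist_zero_right:
  "norm z < 1 \<Longrightarrow> hdist z 0 = arcosh (1 / sqrt (1 - (norm z)\<^sup>2))"
  by (simp add: hdist_eq_arcosh cosh_hdist_def)

definition area_density :: "complex \<Rightarrow> real" where
  "area_density x = 1 / ((1 - (norm x)\<^sup>2) powr (3/2))"

lemma hyp_area_eq_integral: "hyp_area S = integral S area_density"
  by (simp add: hyp_area_def area_density_def[abs_def])

lemma area_density_eq:
  assumes "norm x < 1"
  shows "area_density x = 1 / ((1 - (norm x)\<^sup>2) * sqrt (1 - (norm x)\<^sup>2))"
proof -
  have "(1 - (norm x)\<^sup>2) powr (3/2) = (1 - (norm x)\<^sup>2) powr (1 + 1/2)"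
    by simp
  also have "\<dots> = (1 - (norm x)\<^sup>2) powr 1 * (1 - (norm x)\<^sup>2) powr (1/2)"
    by (rule powr_add)
  also have "\<dots> = (1 - (norm x)\<^sup>2) * sqrt (1 - (norm x)\<^sup>2)"
    using one_minus_norm_square_pos[OF assms] by (simp add: powr_half_sqrt)
  finally show ?thesis
    by (simp add: area_density_def)
qed

lemma one_le_area_density: "norm x < 1 \<Longrightarrow> 1 \<le> area_density x"
  using one_minus_norm_square_pos[of x]
  by (simp add: area_density_eq mult_le_one)

lemma continuous_on_area_density: "continuous_on hyp_plane area_density"
  unfolding area_density_def
  by (intro continuous_intros) (auto simp: mem_hyp_plane abs_square_eq_1)

lemma area_density_integrable:
  "compact S \<Longrightarrow> S \<subseteq> hyp_plane \<Longrightarrow> area_density integrable_on S"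
  by (metis absolutely_integrable_continuous_on_compact continuous_on_area_density
      continuous_on_subset set_lebesgue_integral_eq_integral(1))

lemma content_le_hyp_area:
  assumes "compact S" "S \<subseteq> hyp_plane" "cbox u v \<subseteq> S"
  shows "Henstock_Kurzweil_Integration.content (cbox u v) \<le> hyp_area S"
proof -
  have "Henstock_Kurzweil_Integration.content (cbox u v) = integral (cbox u v) (\<lambda>x. 1)"
    by simp
  also have "\<dots> \<le> integral (cbox u v) area_density"
    using assms by (intro integral_le area_density_integrable)
      (auto simp: one_le_area_density mem_hyp_plane)
  also have "\<dots> \<le> integral S area_density"
    using assms by (intro integral_subset_le area_density_integrable)
      (auto simp: mem_hyp_plane one_le_area_density order_trans[OF zero_le_one])
  finally show ?thesis
    by (simp add: hyp_area_eq_integral)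
qed

lemma convex_hull_subset_hyp_plane:
  "a \<in> hyp_plane \<Longrightarrow> b \<in> hyp_plane \<Longrightarrow> c \<in> hyp_plane \<Longrightarrow> convex hull {a, b, c} \<subseteq> hyp_plane"
  unfolding hyp_plane_def by (rule hull_minimal) (auto simp: convex_ball)

lemma closed_segment_subset_hyp_plane:
  "b \<in> hyp_plane \<Longrightarrow> c \<in> hyp_plane \<Longrightarrow> closed_segment b c \<subseteq> hyp_plane"
  using convex_hull_subset_hyp_plane[of b b c] by (simp add: segment_convex_hull)

lemma compact_hyp_triangle: "compact (hyp_triangle a b c)"
  by (simp add: hyp_triangle_def finite_imp_compact_convex_hull)

lemma hdist_set_segment_bounds:
  assumes "p \<in> hyp_plane" "b \<in> hyp_plane" "c \<in> hyp_plane"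
  shows "0 \<le> hdist_set p (closed_segment b c)"
    and "q \<in> closed_segment b c \<Longrightarrow> hdist_set p (closed_segment b c) \<le> hdist p q"
proof -
  have lower: "0 \<le> x" if "x \<in> hdist p ` closed_segment b c" for x
    using that closed_segment_subset_hyp_plane[OF assms(2,3)] assms(1)
    by (auto simp: mem_hyp_plane hdist_nonneg)
  then show "0 \<le> hdist_set p (closed_segment b c)"
    unfolding hdist_set_def by (intro cInf_greatest) auto
  show "hdist_set p (closed_segment b c) \<le> hdist p q" if "q \<in> closed_segment b c"
    unfolding hdist_set_def using that lower by (intro cInf_lower bdd_belowI) auto
qed

lemma hyp_height_nonneg:
  "a \<in> hyp_plane \<Longrightarrow> b \<in> hyp_plane \<Longrightarrow> c \<in> hyp_plane \<Longrightarrow> 0 \<le> hyp_height a b c"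
  by (simp add: hyp_height_def hdist_set_segment_bounds(1))

section \<open>Boosts along the real axis\<close>

(* The hyperbolic translation along the real diameter that takes s to 0. *)
definition klein_boost :: "real \<Rightarrow> complex \<Rightarrow> complex" where
  "klein_boost s z = Complex ((Re z - s) / (1 - s * Re z)) (sqrt (1 - s\<^sup>2) * Im z / (1 - s * Re z))"

lemma Re_klein_boost [simp]: "Re (klein_boost s z) = (Re z - s) / (1 - s * Re z)"
  and Im_klein_boost [simp]: "Im (klein_boost s z) = sqrt (1 - s\<^sup>2) * Im z / (1 - s * Re z)"
  by (simp_all add: klein_boost_def)

lemma klein_boost_denominator_pos:
  assumes "\<bar>s\<bar> < 1" "norm z < 1"
  shows "0 < 1 - s * Re z"
proof -
  have "\<bar>Re z\<bar> < 1"
    using abs_Re_le_cmod[of z] assms(2) by linarith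
  then have "\<bar>s * Re z\<bar> < 1"
    using mult_strict_mono'[OF assms(1), of "\<bar>Re z\<bar>" 1] by (simp add: abs_mult)
  then show ?thesis
    by linarith
qed

lemma one_minus_norm_klein_boost:
  assumes "\<bar>s\<bar> < 1" "norm z < 1"
  shows "1 - (norm (klein_boost s z))\<^sup>2 = (1 - s\<^sup>2) * (1 - (norm z)\<^sup>2) / (1 - s * Re z)\<^sup>2"
proof -
  have "1 - s * Re z \<noteq> 0" "(sqrt (1 - s\<^sup>2))\<^sup>2 = 1 - s\<^sup>2"
    using klein_boost_denominator_pos[OF assms] abs_square_less_1[of s] assms(1) by auto
  then show ?thesis
    by (simp add: cmod_power2 power_divide power_mult_distrib field_simps)
      (simp add: power2_eq_square algebra_simps)
qed

lemma klein_boost_eq_scaleR: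
  "klein_boost s z = (1 / (1 - s * Re z)) *\<^sub>R Complex (Re z - s) (sqrt (1 - s\<^sup>2) * Im z)"
  by (simp add: complex_eq_iff)

lemma one_minus_inner_klein_boost:
  assumes "\<bar>s\<bar> < 1" "norm p < 1" "norm q < 1"
  shows "1 - klein_boost s p \<bullet> klein_boost s q
           = (1 - s\<^sup>2) * (1 - p \<bullet> q) / ((1 - s * Re p) * (1 - s * Re q))"
proof -
  obtain k where k: "sqrt (1 - s\<^sup>2) = k" "k * k = 1 - s\<^sup>2"
    using abs_square_less_1[of s] assms(1) by (simp add: power2_eq_square[symmetric])
  define N where "N z = Complex (Re z - s) (k * Im z)" for z
  have "(1 - s * Re p) * (1 - s * Re q) \<noteq> 0"
    using klein_boost_denominator_pos[OF assms(1,2)] klein_boost_denominator_pos[OF assms(1,3)]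
    by auto
  moreover have "klein_boost s p \<bullet> klein_boost s q = N p \<bullet> N q / ((1 - s * Re p) * (1 - s * Re q))"
    by (simp add: klein_boost_eq_scaleR k(1) N_def)
  moreover have "(1 - s * Re p) * (1 - s * Re q) - N p \<bullet> N q = (1 - s\<^sup>2) * (1 - p \<bullet> q)"
    using k(2) unfolding N_def inner_complex_def by simp algebra
  ultimately show ?thesis
    by (metis diff_divide_distrib divide_self)
qed

lemma klein_boost_inverse:
  assumes "\<bar>s\<bar> < 1" "norm z < 1"
  shows "klein_boost (-s) (klein_boost s z) = z"
proof -
  obtain k where k: "sqrt (1 - s\<^sup>2) = k" "k * k = 1 - s\<^sup>2"
    using abs_square_less_1[of s] assms(1) by (simp add: power2_eq_square[symmetric])
  have d: "1 - s * Re z \<noteq> 0" "1 - s\<^sup>2 \<noteq> 0"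
    using klein_boost_denominator_pos[OF assms] abs_square_less_1[of s] assms(1) by auto
  define w where "w = klein_boost s z"
  have "1 + s * Re w = (1 - s\<^sup>2) / (1 - s * Re z)" "Re w + s = Re z * (1 - s\<^sup>2) / (1 - s * Re z)"
    using d by (simp_all add: w_def field_simps power2_eq_square)
  moreover have "k * Im w = (1 - s\<^sup>2) * Im z / (1 - s * Re z)"
    using k by (simp add: w_def mult.assoc[symmetric])
  ultimately show ?thesis
    using d k(1) by (simp add: complex_eq_iff flip: w_def)
qed

lemma norm_klein_boost_less_1:
  assumes "\<bar>s\<bar> < 1" "norm z < 1"
  shows "norm (klein_boost s z) < 1"
proof -
  have "0 < (1 - s\<^sup>2) * (1 - (norm z)\<^sup>2) / (1 - s * Re z)\<^sup>2"
    using abs_square_less_1[of s] assms one_minus_norm_square_pos[OF assms(2)]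
      klein_boost_denominator_pos[OF assms] by (intro divide_pos_pos mult_pos_pos) auto
  then have "(norm (klein_boost s z))\<^sup>2 < 1"
    using one_minus_norm_klein_boost[OF assms] by linarith
  then show ?thesis
    by (simp add: abs_square_less_1)
qed

lemma cosh_hdist_klein_boost:
  assumes "\<bar>s\<bar> < 1" "norm p < 1" "norm q < 1"
  shows "cosh_hdist (klein_boost s p) (klein_boost s q) = cosh_hdist p q"
proof -
  define dp dq k where "dp = 1 - s * Re p" and "dq = 1 - s * Re q" and "k = 1 - s\<^sup>2"
  have pos: "0 < dp" "0 < dq" "0 < k"
    using klein_boost_denominator_pos assms abs_square_less_1[of s]
    by (auto simp: dp_def dq_def k_def)
  have "(1 - (norm (klein_boost s p))\<^sup>2) * (1 - (norm (klein_boost s q))\<^sup>2)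
        = k\<^sup>2 * ((1 - (norm p)\<^sup>2) * (1 - (norm q)\<^sup>2)) / (dp * dq)\<^sup>2"
    unfolding one_minus_norm_klein_boost[OF assms(1,2)] one_minus_norm_klein_boost[OF assms(1,3)]
    using pos by (simp add: dp_def dq_def k_def power_mult_distrib power2_eq_square mult_ac)
  then have "sqrt ((1 - (norm (klein_boost s p))\<^sup>2) * (1 - (norm (klein_boost s q))\<^sup>2))
        = k * sqrt ((1 - (norm p)\<^sup>2) * (1 - (norm q)\<^sup>2)) / (dp * dq)"
    using pos by (simp add: real_sqrt_mult real_sqrt_divide)
  moreover have "1 - klein_boost s p \<bullet> klein_boost s q = k * (1 - p \<bullet> q) / (dp * dq)"
    using one_minus_inner_klein_boost[OF assms] by (simp add: dp_def dq_def k_def)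
  ultimately show ?thesis
    using pos by (simp add: cosh_hdist_def)
qed

definition klein_boost_deriv :: "real \<Rightarrow> complex \<Rightarrow> complex \<Rightarrow> complex" where
  "klein_boost_deriv s z w =
     Complex ((1 - s\<^sup>2) * Re w / (1 - s * Re z)\<^sup>2)
             (sqrt (1 - s\<^sup>2) * (Im w * (1 - s * Re z) + s * Im z * Re w) / (1 - s * Re z)\<^sup>2)"

lemma klein_boost_has_derivative:
  assumes "s * Re z \<noteq> 1"
  shows "(klein_boost s has_derivative klein_boost_deriv s z) (at z within S)"
proof -
  have "klein_boost s = (\<lambda>z. of_real ((Re z - s) / (1 - s * Re z))
                               + \<i> * of_real (sqrt (1 - s\<^sup>2) * Im z / (1 - s * Re z)))"
    by (auto simp: complex_eq_iff)
  then show ?thesis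
    using assms
    by (auto intro!: derivative_eq_intros ext
        simp: klein_boost_deriv_def complex_eq_iff field_simps power2_eq_square eval_nat_numeral)
qed

lemma real_jacobian_klein_boost_deriv:
  assumes "s * Re z \<noteq> 1"
  shows "real_jacobian (klein_boost_deriv s z) = (1 - s\<^sup>2) * sqrt (1 - s\<^sup>2) / (1 - s * Re z) ^ 3"
proof -
  obtain d where d: "1 - s * Re z = d" "d \<noteq> 0"
    using assms by auto
  show ?thesis
    unfolding real_jacobian_def klein_boost_deriv_def d(1)
    using d(2) by (simp add: field_simps power2_eq_square power3_eq_cube)
qed

lemma area_density_klein_boost:
  assumes "\<bar>s\<bar> < 1" "norm z < 1"
  shows "\<bar>real_jacobian (klein_boost_deriv s z)\<bar> * area_density (klein_boost s z) = area_density z"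
proof -
  define d P k where "d = 1 - s * Re z" and "P = 1 - (norm z)\<^sup>2" and "k = 1 - s\<^sup>2"
  have pos: "0 < d" "0 < P" "0 < k"
    using klein_boost_denominator_pos[OF assms] one_minus_norm_square_pos[OF assms(2)]
      abs_square_less_1[of s] assms(1) by (auto simp: d_def P_def k_def)
  have "1 - (norm (klein_boost s z))\<^sup>2 = k * P / d\<^sup>2"
    using one_minus_norm_klein_boost[OF assms] by (simp add: d_def P_def k_def)
  moreover have "sqrt (k * P / d\<^sup>2) = sqrt k * sqrt P / d"
    using pos by (simp add: real_sqrt_mult real_sqrt_divide)
  ultimately have "area_density (klein_boost s z) = 1 / ((k * P / d\<^sup>2) * (sqrt k * sqrt P / d))"
    by (simp only: area_density_eq[OF norm_klein_boost_less_1[OF assms]])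
  also have "\<dots> = d ^ 3 / (k * sqrt k * (P * sqrt P))"
    using pos by (simp add: field_simps power2_eq_square power3_eq_cube)
  finally have image: "area_density (klein_boost s z) = d ^ 3 / (k * sqrt k * (P * sqrt P))" .
  have "area_density z = 1 / (P * sqrt P)"
    by (simp add: area_density_eq assms(2) P_def)
  moreover have "\<bar>real_jacobian (klein_boost_deriv s z)\<bar> = k * sqrt k / d ^ 3"
    using pos by (simp add: real_jacobian_klein_boost_deriv d_def k_def)
  ultimately show ?thesis
    unfolding image using pos by (simp add: field_simps)
qed

lemma perspective_image_convex_hull_3_subset:
  fixes L :: "'a::real_vector \<Rightarrow> 'b::real_vector" and l :: "'a \<Rightarrow> real" and d :: real and e :: 'b
  assumes "linear L" "linear l"
    and pos: "\<And>x. x \<in> convex hull {a, b, c} \<Longrightarrow> 0 < l x + d"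
  defines "P \<equiv> \<lambda>x. (1 / (l x + d)) *\<^sub>R (L x + e)"
  shows "P ` (convex hull {a, b, c}) \<subseteq> convex hull {P a, P b, P c}"
proof
  fix y assume "y \<in> P ` (convex hull {a, b, c})"
  then obtain u v w where uvw: "0 \<le> u" "0 \<le> v" "0 \<le> w" "u + v + w = 1"
    and y: "y = P (u *\<^sub>R a + v *\<^sub>R b + w *\<^sub>R c)"
    by (auto simp: convex_hull_3)
  define x where "x = u *\<^sub>R a + v *\<^sub>R b + w *\<^sub>R c"
  have "x \<in> convex hull {a, b, c}"
    using uvw by (auto simp: convex_hull_3 x_def)
  then have D: "0 < l x + d"
    by (rule pos)
  have "a \<in> convex hull {a, b, c}" "b \<in> convex hull {a, b, c}" "c \<in> convex hull {a, b, c}"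
    by (simp_all add: hull_inc)
  then have da: "0 < l a + d" "0 < l b + d" "0 < l c + d"
    by (simp_all add: pos)
  have "(u + v + w) * d = d" "(u + v + w) *\<^sub>R e = e"
    by (simp_all add: uvw(4))
  then have l_x: "l x + d = u * (l a + d) + v * (l b + d) + w * (l c + d)"
    and L_x: "L x + e = u *\<^sub>R (L a + e) + v *\<^sub>R (L b + e) + w *\<^sub>R (L c + e)"
    using \<open>linear l\<close> \<open>linear L\<close>
    by (simp_all add: x_def linear_add linear_scale algebra_simps)
  define ka kb kc where "ka = u * (l a + d) / (l x + d)"
    and "kb = v * (l b + d) / (l x + d)" and "kc = w * (l c + d) / (l x + d)"
  have "ka *\<^sub>R P a = (u / (l x + d)) *\<^sub>R (L a + e)" "kb *\<^sub>R P b = (v / (l x + d)) *\<^sub>R (L b + e)"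
    "kc *\<^sub>R P c = (w / (l x + d)) *\<^sub>R (L c + e)"
    using da by (simp_all add: P_def ka_def kb_def kc_def)
  moreover have "y = (1 / (l x + d)) *\<^sub>R (u *\<^sub>R (L a + e) + v *\<^sub>R (L b + e) + w *\<^sub>R (L c + e))"
    by (simp only: y x_def[symmetric] P_def L_x)
  ultimately have "y = ka *\<^sub>R P a + kb *\<^sub>R P b + kc *\<^sub>R P c"
    by (simp add: scaleR_add_right)
  moreover have "0 \<le> ka" "0 \<le> kb" "0 \<le> kc" "ka + kb + kc = 1"
    using uvw D da l_x by (simp_all add: ka_def kb_def kc_def add_divide_distrib[symmetric])
  ultimately show "y \<in> convex hull {P a, P b, P c}"
    by (auto simp: convex_hull_3)
qed

lemma klein_boost_image_convex_hull_subset: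
  assumes "\<bar>s\<bar> < 1" "a \<in> hyp_plane" "b \<in> hyp_plane" "c \<in> hyp_plane"
  shows "klein_boost s ` (convex hull {a, b, c})
           \<subseteq> convex hull {klein_boost s a, klein_boost s b, klein_boost s c}"
proof -
  define L where "L z = Complex (Re z) (sqrt (1 - s\<^sup>2) * Im z)" for z
  have boost: "klein_boost s = (\<lambda>z. (1 / (- s * Re z + 1)) *\<^sub>R (L z + of_real (- s)))"
    by (auto simp: L_def complex_eq_iff)
  have "linear L" "linear (\<lambda>z. - s * Re z)"
    by (auto intro!: linearI simp: L_def complex_eq_iff algebra_simps)
  moreover have "0 < - s * Re x + 1" if "x \<in> convex hull {a, b, c}" for x
    using that convex_hull_subset_hyp_plane[OF assms(2-4)] klein_boost_denominator_pos[OF assms(1)]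
    by (force simp: mem_hyp_plane)
  ultimately show ?thesis
    unfolding boost by (rule perspective_image_convex_hull_3_subset)
qed

section \<open>Isometries\<close>

(* Only the properties of hyperbolic isometries that the argument uses. *)
definition hyp_isometry :: "(complex \<Rightarrow> complex) \<Rightarrow> bool" where
  "hyp_isometry \<Phi> \<longleftrightarrow>
     continuous_on hyp_plane \<Phi> \<and> \<Phi> ` hyp_plane \<subseteq> hyp_plane \<and>
     (\<forall>p\<in>hyp_plane. \<forall>q\<in>hyp_plane. cosh_hdist (\<Phi> p) (\<Phi> q) = cosh_hdist p q) \<and>
     (\<forall>a\<in>hyp_plane. \<forall>b\<in>hyp_plane. \<forall>c\<in>hyp_plane.
        \<Phi> ` hyp_triangle a b c = hyp_triangle (\<Phi> a) (\<Phi> b) (\<Phi> c)) \<and>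
     (\<forall>S. compact S \<and> S \<subseteq> hyp_plane \<longrightarrow> hyp_area (\<Phi> ` S) = hyp_area S)"

lemma
  assumes "hyp_isometry \<Phi>"
  shows hyp_isometry_continuous_on: "continuous_on hyp_plane \<Phi>"
    and hyp_isometry_mem_hyp_plane: "p \<in> hyp_plane \<Longrightarrow> \<Phi> p \<in> hyp_plane"
    and hyp_isometry_cosh_hdist:
      "p \<in> hyp_plane \<Longrightarrow> q \<in> hyp_plane \<Longrightarrow> cosh_hdist (\<Phi> p) (\<Phi> q) = cosh_hdist p q"
    and hyp_isometry_image_hyp_triangle:
      "a \<in> hyp_plane \<Longrightarrow> b \<in> hyp_plane \<Longrightarrow> c \<in> hyp_plane \<Longrightarrow>
         \<Phi> ` hyp_triangle a b c = hyp_triangle (\<Phi> a) (\<Phi> b) (\<Phi> c)"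
    and hyp_isometry_hyp_area:
      "compact S \<Longrightarrow> S \<subseteq> hyp_plane \<Longrightarrow> hyp_area (\<Phi> ` S) = hyp_area S"
  using assms by (auto simp: hyp_isometry_def)

lemma hyp_isometry_comp:
  assumes "hyp_isometry \<Phi>" "hyp_isometry \<Psi>"
  shows "hyp_isometry (\<Phi> \<circ> \<Psi>)"
proof -
  have "continuous_on hyp_plane (\<Phi> \<circ> \<Psi>)"
    using assms by (intro continuous_on_compose continuous_on_subset[OF hyp_isometry_continuous_on])
      (auto simp: hyp_isometry_continuous_on hyp_isometry_mem_hyp_plane)
  moreover have "compact (\<Psi> ` S)" "\<Psi> ` S \<subseteq> hyp_plane" if "compact S" "S \<subseteq> hyp_plane" for S
    using that assms(2)
    by (auto intro: compact_continuous_image continuous_on_subset hyp_isometry_continuous_on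
        hyp_isometry_mem_hyp_plane)
  ultimately show ?thesis
    unfolding hyp_isometry_def image_comp[symmetric] comp_apply
    using assms by (auto simp: hyp_isometry_mem_hyp_plane hyp_isometry_cosh_hdist
        hyp_isometry_image_hyp_triangle hyp_isometry_hyp_area)
qed

lemma hyp_isometry_image_closed_segment:
  assumes "hyp_isometry \<Phi>" "b \<in> hyp_plane" "c \<in> hyp_plane"
  shows "\<Phi> ` closed_segment b c = closed_segment (\<Phi> b) (\<Phi> c)"
  using hyp_isometry_image_hyp_triangle[OF assms(1,2,3,3)]
  by (simp add: hyp_triangle_def segment_convex_hull)

lemma hyp_isometry_hdist_set:
  assumes "hyp_isometry \<Phi>" "a \<in> hyp_plane" "b \<in> hyp_plane" "c \<in> hyp_plane"
  shows "hdist_set (\<Phi> a) (closed_segment (\<Phi> b) (\<Phi> c)) = hdist_set a (closed_segment b c)"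
proof -
  have "hdist (\<Phi> a) (\<Phi> q) = hdist a q" if "q \<in> closed_segment b c" for q
    using that closed_segment_subset_hyp_plane[OF assms(3,4)] assms(1,2)
    by (auto simp: hdist_eq_arcosh hyp_isometry_cosh_hdist)
  then have "hdist (\<Phi> a) ` \<Phi> ` closed_segment b c = hdist a ` closed_segment b c"
    by (simp add: image_image)
  then show ?thesis
    by (simp add: hdist_set_def hyp_isometry_image_closed_segment[OF assms(1,3,4)])
qed

lemma hyp_isometry_hyp_height:
  assumes "hyp_isometry \<Phi>" "a \<in> hyp_plane" "b \<in> hyp_plane" "c \<in> hyp_plane"
  shows "hyp_height (\<Phi> a) (\<Phi> b) (\<Phi> c) = hyp_height a b c"
  using assms by (simp add: hyp_height_def hyp_isometry_hdist_set)

lemma hyp_isometry_hyp_area_hyp_triangle: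
  assumes "hyp_isometry \<Phi>" "a \<in> hyp_plane" "b \<in> hyp_plane" "c \<in> hyp_plane"
  shows "hyp_area (hyp_triangle (\<Phi> a) (\<Phi> b) (\<Phi> c)) = hyp_area (hyp_triangle a b c)"
proof -
  have "hyp_triangle a b c \<subseteq> hyp_plane"
    using convex_hull_subset_hyp_plane[OF assms(2-4)] by (simp add: hyp_triangle_def)
  then show ?thesis
    using assms by (simp flip: hyp_isometry_image_hyp_triangle
        add: hyp_isometry_hyp_area compact_hyp_triangle)
qed

lemma inner_mult_left_complex:
  fixes u p q :: complex
  shows "(u * p) \<bullet> (u * q) = (norm u)\<^sup>2 * (p \<bullet> q)"
  unfolding cmod_power2 inner_complex_def by (simp add: power2_eq_square algebra_simps)

lemma hyp_isometry_rotation: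
  assumes "norm u = 1"
  shows "hyp_isometry (\<lambda>z. u * z)"
  unfolding hyp_isometry_def
proof (intro conjI ballI allI impI)
  show "cosh_hdist (u * p) (u * q) = cosh_hdist p q" for p q
    using assms by (simp add: cosh_hdist_def inner_mult_left_complex norm_mult)
  show "(\<lambda>z. u * z) ` hyp_triangle a b c = hyp_triangle (u * a) (u * b) (u * c)" for a b c
    by (simp add: hyp_triangle_def convex_hull_linear_image linear_linear bounded_linear_mult_right)
  fix S assume S: "compact S \<and> S \<subseteq> hyp_plane"
  have "integral ((\<lambda>z. u * z) ` S) area_density
          = integral S (\<lambda>z. \<bar>real_jacobian (\<lambda>w. u * w)\<bar> * area_density (u * z))"
  proof (rule integral_change_of_variables_complex)
    show "((\<lambda>z. u * z) has_derivative (\<lambda>w. u * w)) (at z within S)" for z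
      by (simp add: bounded_linear_imp_has_derivative bounded_linear_mult_right)
    show "inj_on (\<lambda>z. u * z) S"
      using assms by (auto simp: inj_on_def)
    show "continuous_on ((\<lambda>z. u * z) ` S) area_density"
      using S assms by (intro continuous_on_subset[OF continuous_on_area_density])
        (auto simp: mem_hyp_plane norm_mult)
  qed (use S in simp)
  moreover have "real_jacobian (\<lambda>w. u * w) = 1"
    using assms cmod_power2[of u] by (simp add: real_jacobian_def power2_eq_square)
  then have "\<bar>real_jacobian (\<lambda>w. u * w)\<bar> * area_density (u * z) = area_density z" for z
    using assms by (simp add: area_density_def norm_mult)
  ultimately show "hyp_area ((\<lambda>z. u * z) ` S) = hyp_area S"
    by (simp add: hyp_area_eq_integral)
qed (use assms in \<open>auto simp: mem_hyp_plane norm_mult intro!: continuous_intros\<close>)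

lemma klein_boost_image_hyp_triangle:
  assumes s: "\<bar>s\<bar> < 1" and abc: "a \<in> hyp_plane" "b \<in> hyp_plane" "c \<in> hyp_plane"
  shows "klein_boost s ` hyp_triangle a b c
           = hyp_triangle (klein_boost s a) (klein_boost s b) (klein_boost s c)"
proof
  show "klein_boost s ` hyp_triangle a b c
          \<subseteq> hyp_triangle (klein_boost s a) (klein_boost s b) (klein_boost s c)"
    unfolding hyp_triangle_def using s abc by (rule klein_boost_image_convex_hull_subset)
next
  have image: "klein_boost s a \<in> hyp_plane" "klein_boost s b \<in> hyp_plane" "klein_boost s c \<in> hyp_plane"
    using abc norm_klein_boost_less_1[OF s] by (auto simp: mem_hyp_plane)
  then have "klein_boost (-s) ` hyp_triangle (klein_boost s a) (klein_boost s b) (klein_boost s c)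
               \<subseteq> hyp_triangle a b c"
    using klein_boost_image_convex_hull_subset[of "-s", OF _ image] s abc
    by (simp add: hyp_triangle_def klein_boost_inverse mem_hyp_plane)
  moreover have "hyp_triangle (klein_boost s a) (klein_boost s b) (klein_boost s c) \<subseteq> hyp_plane"
    unfolding hyp_triangle_def using image by (rule convex_hull_subset_hyp_plane)
  ultimately show "hyp_triangle (klein_boost s a) (klein_boost s b) (klein_boost s c)
                     \<subseteq> klein_boost s ` hyp_triangle a b c"
    using klein_boost_inverse[of "-s"] s by (force simp: mem_hyp_plane)
qed

lemma hyp_area_klein_boost_image:
  assumes s: "\<bar>s\<bar> < 1" and S: "compact S" "S \<subseteq> hyp_plane"
  shows "hyp_area (klein_boost s ` S) = hyp_area S"
proof -
  have "integral (klein_boost s ` S) area_density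
          = integral S (\<lambda>z. \<bar>real_jacobian (klein_boost_deriv s z)\<bar>
                                * area_density (klein_boost s z))"
  proof (rule integral_change_of_variables_complex)
    show "(klein_boost s has_derivative klein_boost_deriv s z) (at z within S)" if "z \<in> S" for z
      using that S klein_boost_denominator_pos[OF s]
      by (intro klein_boost_has_derivative) (force simp: mem_hyp_plane)
    show "inj_on (klein_boost s) S"
      using S s by (intro inj_on_inverseI[where g = "klein_boost (-s)"])
        (auto simp: klein_boost_inverse mem_hyp_plane)
    show "continuous_on (klein_boost s ` S) area_density"
      using S norm_klein_boost_less_1[OF s]
      by (intro continuous_on_subset[OF continuous_on_area_density]) (auto simp: mem_hyp_plane)
  qed (use S in auto)
  also have "\<dots> = integral S area_density"
    using S s by (intro integral_cong) (auto simp: area_density_klein_boost mem_hyp_plane)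
  finally show ?thesis
    by (simp add: hyp_area_eq_integral)
qed

lemma hyp_isometry_klein_boost:
  assumes s: "\<bar>s\<bar> < 1"
  shows "hyp_isometry (klein_boost s)"
  unfolding hyp_isometry_def
proof (intro conjI ballI allI impI)
  have "(klein_boost s has_derivative klein_boost_deriv s z) (at z within hyp_plane)"
    if "z \<in> hyp_plane" for z
    using that klein_boost_denominator_pos[OF s]
    by (intro klein_boost_has_derivative) (force simp: mem_hyp_plane)
  then show "continuous_on hyp_plane (klein_boost s)"
    by (meson continuous_on_eq_continuous_within has_derivative_continuous)
  show "klein_boost s ` hyp_plane \<subseteq> hyp_plane"
    using norm_klein_boost_less_1[OF s] by (auto simp: mem_hyp_plane)
qed (use s in \<open>auto simp: mem_hyp_plane cosh_hdist_klein_boost klein_boost_image_hyp_triangle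
        hyp_area_klein_boost_image\<close>)

lemma exists_hyp_isometry_real_pair:
  assumes "b \<in> hyp_plane" "c \<in> hyp_plane" "b \<noteq> c"
  obtains \<Psi> where "hyp_isometry \<Psi>" "Im (\<Psi> b) = 0" "Im (\<Psi> c) = 0"
proof -
  define d where "d = c - b"
  define u where "u = \<i> * cnj d / norm d"
  have "d \<noteq> 0"
    using assms(3) by (simp add: d_def)
  then have u: "norm u = 1"
    by (simp add: u_def norm_divide norm_mult)
  have "u * d = \<i> * norm d"
    using \<open>d \<noteq> 0\<close> complex_norm_square[of d] by (simp add: u_def field_simps power2_eq_square)
  moreover have "Re (u * c) - Re (u * b) = Re (u * d)"
    by (simp add: d_def algebra_simps)
  ultimately have Re_u: "Re (u * c) = Re (u * b)"
    by simp
  define s where "s = Re (u * b)"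
  have s: "\<bar>s\<bar> < 1"
    using assms(1) u abs_Re_le_cmod[of "u * b"] by (simp add: s_def mem_hyp_plane norm_mult)
  define \<Psi> where "\<Psi> = (\<lambda>z. - \<i> * z) \<circ> klein_boost s \<circ> (\<lambda>z. u * z)"
  show thesis
  proof
    show "hyp_isometry \<Psi>"
      unfolding \<Psi>_def using u s
      by (intro hyp_isometry_comp hyp_isometry_rotation hyp_isometry_klein_boost) auto
    show "Im (\<Psi> b) = 0" "Im (\<Psi> c) = 0"
      using Re_u by (simp_all add: \<Psi>_def s_def)
  qed
qed

lemma exists_hyp_isometry_normal_position:
  assumes "a \<in> hyp_plane" "b \<in> hyp_plane" "c \<in> hyp_plane" "b \<noteq> c"
  obtains \<Phi> where "hyp_isometry \<Phi>" "Re (\<Phi> a) = 0" "0 \<le> Im (\<Phi> a)" "Im (\<Phi> b) = 0" "Im (\<Phi> c) = 0"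
proof -
  obtain \<Psi> where \<Psi>: "hyp_isometry \<Psi>" "Im (\<Psi> b) = 0" "Im (\<Psi> c) = 0"
    using exists_hyp_isometry_real_pair[OF assms(2-4)] .
  define s where "s = Re (\<Psi> a)"
  have s: "\<bar>s\<bar> < 1"
    using hyp_isometry_mem_hyp_plane[OF \<Psi>(1) assms(1)] abs_Re_le_cmod[of "\<Psi> a"]
    by (simp add: s_def mem_hyp_plane)
  define \<sigma> :: complex where "\<sigma> = (if Im (klein_boost s (\<Psi> a)) < 0 then -1 else 1)"
  define \<Phi> where "\<Phi> = (\<lambda>z. \<sigma> * z) \<circ> klein_boost s \<circ> \<Psi>"
  show thesis
  proof
    show "hyp_isometry \<Phi>"
      unfolding \<Phi>_def using \<Psi>(1) s
      by (intro hyp_isometry_comp hyp_isometry_rotation hyp_isometry_klein_boost) (auto simp: \<sigma>_def)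
    show "Re (\<Phi> a) = 0" "0 \<le> Im (\<Phi> a)" "Im (\<Phi> b) = 0" "Im (\<Phi> c) = 0"
      using \<Psi>(2,3) by (auto simp: \<Phi>_def \<sigma>_def s_def)
  qed
qed

section \<open>Triangles in normal position\<close>

lemma min_le_abs_mult_le_max:
  fixes \<beta> \<gamma> :: real
  shows "min (\<beta>\<^sup>2) (\<gamma>\<^sup>2) \<le> \<bar>\<beta>\<bar> * \<bar>\<gamma>\<bar>" "\<bar>\<beta>\<bar> * \<bar>\<gamma>\<bar> \<le> max (\<beta>\<^sup>2) (\<gamma>\<^sup>2)"
proof -
  have "\<beta>\<^sup>2 \<le> \<bar>\<beta>\<bar> * \<bar>\<gamma>\<bar> \<and> \<bar>\<beta>\<bar> * \<bar>\<gamma>\<bar> \<le> \<gamma>\<^sup>2" if "\<bar>\<beta>\<bar> \<le> \<bar>\<gamma>\<bar>" for \<beta> \<gamma> :: real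
    using that mult_left_mono[OF that, of "\<bar>\<beta>\<bar>"] mult_right_mono[OF that, of "\<bar>\<gamma>\<bar>"]
    by (simp add: power2_eq_square abs_mult_self_eq)
  from this[of \<beta> \<gamma>] this[of \<gamma> \<beta>]
  show "min (\<beta>\<^sup>2) (\<gamma>\<^sup>2) \<le> \<bar>\<beta>\<bar> * \<bar>\<gamma>\<bar>" "\<bar>\<beta>\<bar> * \<bar>\<gamma>\<bar> \<le> max (\<beta>\<^sup>2) (\<gamma>\<^sup>2)"
    by (auto simp: min_def max_def mult.commute abs_le_square_iff[symmetric])
qed

lemma longest_side_sign:
  fixes \<beta> \<gamma> t :: real
  assumes "\<bar>\<beta>\<bar> < 1" "\<bar>\<gamma>\<bar> < 1"
    and "1 - \<beta>\<^sup>2 \<le> (1 - \<beta> * \<gamma>)\<^sup>2 * (1 - t\<^sup>2)" "1 - \<gamma>\<^sup>2 \<le> (1 - \<beta> * \<gamma>)\<^sup>2 * (1 - t\<^sup>2)"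
  shows "\<beta> * \<gamma> \<le> 0"
proof (rule ccontr)
  assume "\<not> \<beta> * \<gamma> \<le> 0"
  define \<mu> where "\<mu> = min (\<beta>\<^sup>2) (\<gamma>\<^sup>2)"
  have "\<mu> \<le> \<beta> * \<gamma>" "\<beta> * \<gamma> < 1"
    using min_le_abs_mult_le_max(1)[of \<beta> \<gamma>] \<open>\<not> \<beta> * \<gamma> \<le> 0\<close> mult_strict_mono'[OF assms(1,2)]
    by (simp_all add: \<mu>_def abs_mult[symmetric])
  have "0 < \<mu>" "\<mu> < 1"
    using \<open>\<not> \<beta> * \<gamma> \<le> 0\<close> assms(1,2) by (auto simp: \<mu>_def min_def abs_square_less_1)
  have "1 - \<mu> \<le> (1 - \<beta> * \<gamma>)\<^sup>2 * (1 - t\<^sup>2)"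
    using assms(3,4) by (simp add: \<mu>_def min_def)
  also have "\<dots> \<le> (1 - \<beta> * \<gamma>)\<^sup>2"
    by (simp add: mult_left_le)
  also have "\<dots> \<le> (1 - \<mu>)\<^sup>2"
    using \<open>\<mu> \<le> \<beta> * \<gamma>\<close> \<open>\<beta> * \<gamma> < 1\<close> by (intro power_mono) auto
  also have "\<dots> < 1 - \<mu>"
    using \<open>0 < \<mu>\<close> \<open>\<mu> < 1\<close> by (simp add: power2_eq_square)
  finally show False
    by simp
qed

lemma longest_side_altitude_bound:
  fixes \<beta> \<gamma> t :: real
  assumes "\<beta> * \<gamma> \<le> 0" "\<bar>t\<bar> < 1"
    and "1 - \<beta>\<^sup>2 \<le> (1 - \<beta> * \<gamma>)\<^sup>2 * (1 - t\<^sup>2)" "1 - \<gamma>\<^sup>2 \<le> (1 - \<beta> * \<gamma>)\<^sup>2 * (1 - t\<^sup>2)"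
  shows "t\<^sup>2 \<le> 3 * max (\<beta>\<^sup>2) (\<gamma>\<^sup>2)"
proof (rule ccontr)
  define M where "M = max (\<beta>\<^sup>2) (\<gamma>\<^sup>2)"
  assume "\<not> t\<^sup>2 \<le> 3 * M"
  have "0 \<le> M" "0 < 1 - t\<^sup>2"
    using assms(2) by (auto simp: M_def max_def abs_square_less_1)
  have "- \<beta> * \<gamma> \<le> M"
    using min_le_abs_mult_le_max(2)[of \<beta> \<gamma>] assms(1) by (simp add: M_def abs_mult[symmetric])
  have "1 - M \<le> (1 - \<beta> * \<gamma>)\<^sup>2 * (1 - t\<^sup>2)"
    using assms(3,4) by (simp add: M_def max_def)
  also have "\<dots> \<le> (1 + M)\<^sup>2 * (1 - t\<^sup>2)"
    using \<open>- \<beta> * \<gamma> \<le> M\<close> assms(1) \<open>0 < 1 - t\<^sup>2\<close> by (intro mult_right_mono power_mono) auto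
  also have "\<dots> < (1 + M)\<^sup>2 * (1 - 3 * M)"
    using \<open>\<not> t\<^sup>2 \<le> 3 * M\<close> \<open>0 \<le> M\<close> by (intro mult_strict_left_mono) auto
  also have "\<dots> = 1 - M - 5 * M\<^sup>2 - 3 * M ^ 3"
    by (simp add: power2_eq_square power3_eq_cube algebra_simps)
  also have "\<dots> \<le> 1 - M"
    using zero_le_power[OF \<open>0 \<le> M\<close>, of 3] zero_le_power2[of M] by linarith
  finally show False
    by simp
qed

lemma cosh_hdist_imaginary_real:
  "cosh_hdist (Complex 0 t) (of_real \<beta>) = 1 / sqrt ((1 - t\<^sup>2) * (1 - \<beta>\<^sup>2))"
  by (simp add: cosh_hdist_def inner_complex_def cmod_power2)

lemma cosh_hdist_real_real:
  "cosh_hdist (of_real \<beta>) (of_real \<gamma>) = (1 - \<beta> * \<gamma>) / sqrt ((1 - \<beta>\<^sup>2) * (1 - \<gamma>\<^sup>2))"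
  by (simp add: cosh_hdist_def inner_complex_def cmod_power2)

lemma inverse_sqrt_le_divide_sqrt_imp:
  fixes A B G X :: real
  assumes "0 < A" "0 < B" "0 < G" "1 / sqrt (A * B) \<le> X / sqrt (B * G)"
  shows "G \<le> X\<^sup>2 * A"
proof -
  have "sqrt G \<le> X * sqrt A"
    using assms by (simp add: real_sqrt_mult field_simps)
  then have "(sqrt G)\<^sup>2 \<le> (X * sqrt A)\<^sup>2"
    using assms(3) by (intro power_mono) auto
  then show ?thesis
    using assms(1) less_imp_le[OF assms(3)] by (simp add: power_mult_distrib)
qed

lemma arcosh_inverse_sqrt_le:
  fixes t :: real
  assumes "0 \<le> t" "t \<le> 1/2"
  shows "arcosh (1 / sqrt (1 - t\<^sup>2)) \<le> 2 * t"
proof -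
  have "t\<^sup>2 \<le> 1/4"
    using power_mono[OF assms(2,1), of 2] by (simp add: power2_eq_square)
  then have pos: "0 < 1 - t\<^sup>2" "0 < sqrt (1 - t\<^sup>2)" "sqrt (1 - t\<^sup>2) \<le> 1"
    by auto
  define X where "X = 1 / sqrt (1 - t\<^sup>2)"
  have "1 \<le> X"
    using pos by (simp add: X_def)
  have "X\<^sup>2 - 1 = t\<^sup>2 / (1 - t\<^sup>2)"
    using pos by (simp add: X_def power_divide field_simps)
  then have "X + sqrt (X\<^sup>2 - 1) = (1 + t) / sqrt (1 - t\<^sup>2)"
    using assms(1) by (simp add: X_def real_sqrt_divide add_divide_distrib)
  moreover have "arcosh X \<le> X + sqrt (X\<^sup>2 - 1) - 1"
    using \<open>1 \<le> X\<close> by (simp add: arcosh_real_def ln_le_minus_one add_pos_nonneg)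
  moreover have "(1 + t)\<^sup>2 \<le> (1 + 2 * t)\<^sup>2 * (1 - t\<^sup>2)"
  proof -
    have "(1 + 2 * t)\<^sup>2 * (1 - t\<^sup>2) - (1 + t)\<^sup>2 = 2 * t * (1 + t) * (1 - 2 * t\<^sup>2)"
      by (simp add: power2_eq_square algebra_simps)
    moreover have "0 \<le> 2 * t * (1 + t) * (1 - 2 * t\<^sup>2)"
      using assms \<open>t\<^sup>2 \<le> 1/4\<close> by simp
    ultimately show ?thesis
      by linarith
  qed
  then have "1 + t \<le> sqrt ((1 + 2 * t)\<^sup>2 * (1 - t\<^sup>2))"
    by (rule real_le_rsqrt)
  then have "1 + t \<le> (1 + 2 * t) * sqrt (1 - t\<^sup>2)"
    using assms(1) by (simp add: real_sqrt_mult)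
  then have "(1 + t) / sqrt (1 - t\<^sup>2) \<le> 1 + 2 * t"
    using pos by (simp add: divide_le_eq)
  ultimately show ?thesis
    by (simp add: X_def)
qed

lemma cbox_subset_convex_hull_axes:
  "cbox (Complex (min 0 (\<epsilon> / 2)) 0) (Complex (max 0 (\<epsilon> / 2)) (t / 2))
     \<subseteq> convex hull {0, Complex 0 t, of_real \<epsilon>}"
proof
  fix z assume "z \<in> cbox (Complex (min 0 (\<epsilon> / 2)) 0) (Complex (max 0 (\<epsilon> / 2)) (t / 2))"
  then have "Re z \<in> closed_segment 0 (\<epsilon> / 2)" "Im z \<in> closed_segment 0 (t / 2)"
    by (auto simp: in_cbox_complex_iff closed_segment_eq_real_ivl)
  then obtain l m where "0 \<le> l" "l \<le> 1" "Re z = l * (\<epsilon> / 2)" "0 \<le> m" "m \<le> 1" "Im z = m * (t / 2)"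
    by (auto simp: in_segment)
  then have "z = (1 - m / 2 - l / 2) *\<^sub>R 0 + (m / 2) *\<^sub>R Complex 0 t + (l / 2) *\<^sub>R of_real \<epsilon>"
    and "0 \<le> 1 - m / 2 - l / 2"
    by (auto simp: complex_eq_iff)
  with \<open>0 \<le> l\<close> \<open>0 \<le> m\<close> show "z \<in> convex hull {0, Complex 0 t, of_real \<epsilon>}"
    unfolding convex_hull_3
    by (intro CollectI exI[of _ "1 - m / 2 - l / 2"] exI[of _ "m / 2"] exI[of _ "l / 2"]) auto
qed

lemma hyp_area_ge_axes_triangle:
  assumes "0 \<le> t" "convex T" "compact T" "T \<subseteq> hyp_plane" "{0, Complex 0 t, of_real \<epsilon>} \<subseteq> T"
  shows "\<bar>\<epsilon>\<bar> * t / 4 \<le> hyp_area T"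
proof -
  have "cbox (Complex (min 0 (\<epsilon> / 2)) 0) (Complex (max 0 (\<epsilon> / 2)) (t / 2)) \<subseteq> T"
    using cbox_subset_convex_hull_axes hull_minimal[of _ T convex] assms(2,5) by blast
  then have "Henstock_Kurzweil_Integration.content
               (cbox (Complex (min 0 (\<epsilon> / 2)) 0) (Complex (max 0 (\<epsilon> / 2)) (t / 2))) \<le> hyp_area T"
    using assms(3,4) by (rule content_le_hyp_area[rotated 2])
  moreover have "Henstock_Kurzweil_Integration.content
               (cbox (Complex (min 0 (\<epsilon> / 2)) 0) (Complex (max 0 (\<epsilon> / 2)) (t / 2))) = \<bar>\<epsilon>\<bar> * t / 4"
    using assms(1) by (simp add: content_cbox_cases Basis_complex_def max_def min_def)
  ultimately show ?thesis
    by simp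
qed

lemma longest_side_normal_position:
  fixes t \<beta> \<gamma> :: real
  assumes "0 \<le> t" "t < 1" "\<bar>\<beta>\<bar> < 1" "\<bar>\<gamma>\<bar> < 1"
    and "cosh_hdist (Complex 0 t) (of_real \<beta>) \<le> cosh_hdist (of_real \<beta>) (of_real \<gamma>)"
    and "cosh_hdist (Complex 0 t) (of_real \<gamma>) \<le> cosh_hdist (of_real \<beta>) (of_real \<gamma>)"
  shows "\<beta> * \<gamma> \<le> 0" and "t\<^sup>2 \<le> 3 * max (\<beta>\<^sup>2) (\<gamma>\<^sup>2)"
proof -
  have pos: "0 < 1 - t\<^sup>2" "0 < 1 - \<beta>\<^sup>2" "0 < 1 - \<gamma>\<^sup>2"
    using assms(1-4) by (simp_all add: abs_square_less_1)
  have "1 - \<beta>\<^sup>2 \<le> (1 - \<beta> * \<gamma>)\<^sup>2 * (1 - t\<^sup>2)"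
    using assms(6) pos
    by (intro inverse_sqrt_le_divide_sqrt_imp[where B = "1 - \<gamma>\<^sup>2"])
      (simp_all add: cosh_hdist_imaginary_real cosh_hdist_real_real mult.commute)
  moreover have "1 - \<gamma>\<^sup>2 \<le> (1 - \<beta> * \<gamma>)\<^sup>2 * (1 - t\<^sup>2)"
    using assms(5) pos
    by (intro inverse_sqrt_le_divide_sqrt_imp[where B = "1 - \<beta>\<^sup>2"])
      (simp_all add: cosh_hdist_imaginary_real cosh_hdist_real_real)
  ultimately show "\<beta> * \<gamma> \<le> 0" "t\<^sup>2 \<le> 3 * max (\<beta>\<^sup>2) (\<gamma>\<^sup>2)"
    using longest_side_sign[OF assms(3,4)] longest_side_altitude_bound assms(1,2) by auto
qed

lemma min_one_square_le_altitude_product: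
  fixes h t \<epsilon> :: real
  assumes "0 \<le> h" "h \<le> arcosh (1 / sqrt (1 - t\<^sup>2))" "0 \<le> t" "t\<^sup>2 \<le> 3 * \<epsilon>\<^sup>2"
  shows "1/32 * min 1 (h\<^sup>2) \<le> \<bar>\<epsilon>\<bar> * t / 4"
proof (cases "t \<le> 1/2")
  case True
  have "t\<^sup>2 \<le> 4 * \<epsilon>\<^sup>2"
    using assms(4) zero_le_power2[of \<epsilon>] by linarith
  then have "t\<^sup>2 \<le> (2 * \<bar>\<epsilon>\<bar>)\<^sup>2"
    by (simp add: power_mult_distrib)
  then have "t \<le> 2 * \<bar>\<epsilon>\<bar>"
    by (rule power2_le_imp_le) simp
  moreover have "h\<^sup>2 \<le> (2 * t)\<^sup>2"
    using assms(1,2) arcosh_inverse_sqrt_le[OF assms(3) True] by (intro power_mono) auto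
  ultimately show ?thesis
    using mult_right_mono[OF \<open>t \<le> 2 * \<bar>\<epsilon>\<bar>\<close> assms(3)]
    by (simp add: power_mult_distrib power2_eq_square min_le_iff_disj)
next
  case False
  have "(1/2)\<^sup>2 \<le> t\<^sup>2"
    using False by (intro power_mono) auto
  then have "(1/4)\<^sup>2 \<le> \<bar>\<epsilon>\<bar>\<^sup>2"
    using assms(4) by (simp add: power_divide)
  then have "1/4 \<le> \<bar>\<epsilon>\<bar>"
    by (rule power2_le_imp_le) simp
  then have "1/4 * (1/2) \<le> \<bar>\<epsilon>\<bar> * t"
    using False by (intro mult_mono) auto
  then show ?thesis
    by (simp add: min_le_iff_disj)
qed

lemma hyp_area_ge_normal_position:
  fixes t \<beta> \<gamma> :: real
  defines "a \<equiv> Complex 0 t" and "b \<equiv> complex_of_real \<beta>" and "c \<equiv> complex_of_real \<gamma>"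
  assumes t: "0 \<le> t" "t < 1" and \<beta>\<gamma>: "\<bar>\<beta>\<bar> < 1" "\<bar>\<gamma>\<bar> < 1"
    and longest: "cosh_hdist a b \<le> cosh_hdist b c" "cosh_hdist a c \<le> cosh_hdist b c"
  shows "1/32 * min 1 ((hyp_height a b c)\<^sup>2) \<le> hyp_area (hyp_triangle a b c)"
proof -
  have plane: "a \<in> hyp_plane" "b \<in> hyp_plane" "c \<in> hyp_plane"
    using t \<beta>\<gamma> by (simp_all add: a_def b_def c_def mem_hyp_plane complex_norm)
  note sign = longest_side_normal_position(1)[OF t \<beta>\<gamma> longest[unfolded a_def b_def c_def]]
  note altitude = longest_side_normal_position(2)[OF t \<beta>\<gamma> longest[unfolded a_def b_def c_def]]
  obtain \<epsilon> where \<epsilon>: "complex_of_real \<epsilon> \<in> {b, c}" "\<epsilon>\<^sup>2 = max (\<beta>\<^sup>2) (\<gamma>\<^sup>2)"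
    by (cases "\<beta>\<^sup>2 \<le> \<gamma>\<^sup>2") (auto simp: b_def c_def max_def)
  have "0 \<in> closed_segment b c"
    using sign of_real_closed_segment[of 0 \<beta> \<gamma>]
    by (auto simp: b_def c_def closed_segment_eq_real_ivl mult_le_0_iff split: if_split_asm)
  have "hyp_height a b c \<le> hdist_set a (closed_segment b c)"
    by (simp add: hyp_height_def)
  also have "\<dots> \<le> hdist a 0"
    using plane \<open>0 \<in> closed_segment b c\<close> by (rule hdist_set_segment_bounds(2))
  also have "\<dots> = arcosh (1 / sqrt (1 - t\<^sup>2))"
    using t by (simp add: a_def hdist_zero_right complex_norm)
  finally have "1/32 * min 1 ((hyp_height a b c)\<^sup>2) \<le> \<bar>\<epsilon>\<bar> * t / 4"
    using plane altitude \<epsilon>(2) t(1)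
    by (intro min_one_square_le_altitude_product hyp_height_nonneg) auto
  also have "\<dots> \<le> hyp_area (hyp_triangle a b c)"
  proof (rule hyp_area_ge_axes_triangle)
    have "closed_segment b c \<subseteq> hyp_triangle a b c"
      unfolding hyp_triangle_def segment_convex_hull by (rule hull_mono) auto
    then show "{0, Complex 0 t, complex_of_real \<epsilon>} \<subseteq> hyp_triangle a b c"
      using \<open>0 \<in> closed_segment b c\<close> \<epsilon>(1) by (auto simp: hyp_triangle_def a_def hull_inc)
    show "hyp_triangle a b c \<subseteq> hyp_plane"
      unfolding hyp_triangle_def using plane by (rule convex_hull_subset_hyp_plane)
  qed (simp_all add: t hyp_triangle_def compact_hyp_triangle[unfolded hyp_triangle_def])
  finally show ?thesis .
qed

section \<open>The area bound\<close>

lemma hyp_area_ge_longest_side: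
  assumes plane: "a \<in> hyp_plane" "b \<in> hyp_plane" "c \<in> hyp_plane" and "b \<noteq> c"
    and longest: "cosh_hdist a b \<le> cosh_hdist b c" "cosh_hdist a c \<le> cosh_hdist b c"
  shows "1/32 * min 1 ((hyp_height a b c)\<^sup>2) \<le> hyp_area (hyp_triangle a b c)"
proof -
  obtain \<Phi> where \<Phi>: "hyp_isometry \<Phi>" "Re (\<Phi> a) = 0" "0 \<le> Im (\<Phi> a)" "Im (\<Phi> b) = 0" "Im (\<Phi> c) = 0"
    using exists_hyp_isometry_normal_position[OF plane \<open>b \<noteq> c\<close>] .
  define t \<beta> \<gamma> where "t = Im (\<Phi> a)" and "\<beta> = Re (\<Phi> b)" and "\<gamma> = Re (\<Phi> c)"
  have \<Phi>_abc: "\<Phi> a = Complex 0 t" "\<Phi> b = of_real \<beta>" "\<Phi> c = of_real \<gamma>"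
    using \<Phi> by (simp_all add: t_def \<beta>_def \<gamma>_def complex_eq_iff)
  have "\<Phi> a \<in> hyp_plane" "\<Phi> b \<in> hyp_plane" "\<Phi> c \<in> hyp_plane"
    using plane by (simp_all add: hyp_isometry_mem_hyp_plane[OF \<Phi>(1)])
  then have "t < 1" "\<bar>\<beta>\<bar> < 1" "\<bar>\<gamma>\<bar> < 1"
    using abs_Im_le_cmod[of "\<Phi> a"] abs_Re_le_cmod[of "\<Phi> b"] abs_Re_le_cmod[of "\<Phi> c"]
    by (auto simp: mem_hyp_plane t_def \<beta>_def \<gamma>_def)
  moreover have "cosh_hdist (\<Phi> a) (\<Phi> b) \<le> cosh_hdist (\<Phi> b) (\<Phi> c)"
    "cosh_hdist (\<Phi> a) (\<Phi> c) \<le> cosh_hdist (\<Phi> b) (\<Phi> c)"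
    using longest plane by (simp_all add: hyp_isometry_cosh_hdist[OF \<Phi>(1)])
  ultimately have "1/32 * min 1 ((hyp_height (\<Phi> a) (\<Phi> b) (\<Phi> c))\<^sup>2)
                     \<le> hyp_area (hyp_triangle (\<Phi> a) (\<Phi> b) (\<Phi> c))"
    unfolding \<Phi>_abc using \<Phi>(3) by (intro hyp_area_ge_normal_position) (simp_all add: t_def)
  then show ?thesis
    using \<Phi>(1) plane by (simp add: hyp_isometry_hyp_height hyp_isometry_hyp_area_hyp_triangle)
qed

lemma hyp_height_swap: "hyp_height b a c = hyp_height a b c" "hyp_height a c b = hyp_height a b c"
  by (simp_all add: hyp_height_def closed_segment_commute min.commute min.left_commute)

lemma hyp_triangle_swap:
  "hyp_triangle b a c = hyp_triangle a b c" "hyp_triangle a c b = hyp_triangle a b c"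
  by (simp_all add: hyp_triangle_def insert_commute)

lemma hyp_area_ge_hyp_height:
  assumes plane: "a \<in> hyp_plane" "b \<in> hyp_plane" "c \<in> hyp_plane"
    and distinct: "a \<noteq> b" "a \<noteq> c" "b \<noteq> c"
  shows "1/32 * min 1 ((hyp_height a b c)\<^sup>2) \<le> hyp_area (hyp_triangle a b c)"
proof -
  consider "cosh_hdist a b \<le> cosh_hdist b c" "cosh_hdist a c \<le> cosh_hdist b c"
    | "cosh_hdist b a \<le> cosh_hdist a c" "cosh_hdist b c \<le> cosh_hdist a c"
    | "cosh_hdist c a \<le> cosh_hdist a b" "cosh_hdist c b \<le> cosh_hdist a b"
    using cosh_hdist_commute by (smt (verit))
  then show ?thesis
  proof cases
    case 1
    then show ?thesis
      using plane distinct by (intro hyp_area_ge_longest_side)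
  next
    case 2
    then have "1/32 * min 1 ((hyp_height b a c)\<^sup>2) \<le> hyp_area (hyp_triangle b a c)"
      using plane distinct by (intro hyp_area_ge_longest_side)
    then show ?thesis
      by (simp add: hyp_height_swap hyp_triangle_swap)
  next
    case 3
    then have "1/32 * min 1 ((hyp_height c a b)\<^sup>2) \<le> hyp_area (hyp_triangle c a b)"
      using plane distinct by (intro hyp_area_ge_longest_side)
    then show ?thesis
      by (simp add: hyp_height_swap hyp_triangle_swap)
  qed
qed

theorem lemma5:
  shows "\<exists>C>0. \<forall>a b c. a \<in> hyp_plane \<and> b \<in> hyp_plane \<and> c \<in> hyp_plane \<and> \<not> collinear {a, b, c}
            \<longrightarrow> hyp_area (hyp_triangle a b c) \<ge> C * min 1 ((hyp_height a b c)\<^sup>2)"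
proof (intro exI[of _ "1/32"] conjI allI impI)
  fix a b c
  assume abc: "a \<in> hyp_plane \<and> b \<in> hyp_plane \<and> c \<in> hyp_plane \<and> \<not> collinear {a, b, c}"
  then have "a \<noteq> b" "a \<noteq> c" "b \<noteq> c"
    by (auto simp: collinear_2 insert_commute)
  with abc show "1/32 * min 1 ((hyp_height a b c)\<^sup>2) \<le> hyp_area (hyp_triangle a b c)"
    by (intro hyp_area_ge_hyp_height) auto
qed simp

end
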